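(* Consider any instance $\mathcal{I}$ of the online volunteer notification problem whose inter-activity time distribution has minimum discrete hazard rate $q$. Then the scaled-down notification (SDN) policy is $\frac{1}{2-q}\left(1-\frac{1}{e}\right)$-competitive, i.e., $\mathbf{POL}_{\mathcal{I}}\ge\frac{1}{2-q}\left(1-\frac1e\right)\mathbf{LP}_{\mathcal{I}}$ for every such instance, where $\mathbf{POL}_{\mathcal{I}}$ is the SDN policy's expected number of completed tasks.
   Context: Online volunteer notification problem. An instance $\mathcal{I}$ consists of volunteers $[V]$, task types $[S]$, horizon $T$, arrival probabilities $\lambda_{s,t}\ge0$ with $\sum_{s=1}^S\lambda_{s,t}\le1$, match probabilities $p_{v,s}\in[0,1]$, and a probability mass function $g$ on the positive integers with CDF $G(\tau)=\sum_{i\le\tau}g(i)$, $G(0)=0$. In each period $t$ at most one task arrives, of type $s$ with probability $\lambda_{s,t}$, independently across periods. All volunteers start active. Upon an arrival the platform immediately and irrevocably notifies a subset of volunteers; each notified active volunteer $v$ responds positively independently with probability $p_{v,s}$, and the task is completed iff at least one does. A volunteer who is active and notified at time $t$ becomes inactive (regardless of response) and becomes active again at time $t+Z$, $Z\sim g$ independent; inactive volunteers ignore notifications and are unaffected by them. The platform knows $\lambda,p,g$ but not states. MDHR: $q=\min_{\tau\in\mathbb{N}}\frac{g(\tau)}{1-G(\tau-1)}$ (with $\frac00:=1$). $\mathcal{P}$: set of $\mathbf{x}\in\mathbb{R}^{V\times S\times T}$ with $0\le x_{v,s,t}\le1$ and $\sum_{\tau=1}^t\sum_{s}\lambda_{s,\tau}x_{v,s,\tau}(1-G(t-\tau))\le1$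 for all $v,t$. $\mathbf{LP}_{\mathcal{I}}=\max_{\mathbf{x}\in\mathcal{P}}\sum_{t,s}\lambda_{s,t}\min\{\sum_v x_{v,s,t}p_{v,s},1\}$. A policy is $c$-competitive if $\mathbf{POL}_{\mathcal{I}}\ge c\,\mathbf{LP}_{\mathcal{I}}$ for all instances. Ex ante solution: $f(\mathbf{x})=\sum_{t,s}\lambda_{s,t}\big(1-\prod_{v}(1-x_{v,s,t}p_{v,s})\big)$; $\mathbf{x}^*_{LP}$ an optimal solution of $\mathbf{LP}_{\mathcal{I}}$; $\mathbf{x}^*_{AA}$ the output of: $\mathbf{x}^0=\mathbf{0}$, for $i=1..m$ (some $m\in\mathbb{N}$) $\mathbf{y}^i\in\arg\max_{\mathbf{x}\in\mathcal{P}}\langle\mathbf{x},\nabla f(\mathbf{x}^{i-1})\rangle$, $\mathbf{x}^i=\mathbf{x}^{i-1}+\mathbf{y}^i/m$, output $\mathbf{x}^m$; $\mathbf{x}^*_{SQ}$ built for $v=1,\dots,V$ in order, $(x^{SQ}_{v,s,t})_{s,t}$ optimal for $\max\sum_{t,s}\lambda_{s,t}\prod_{u<v}(1-p_{u,s}x^{SQ}_{u,s,t})p_{v,s}x_{v,s,t}$ s.t. $0\le x_{v,s,t}\le1$, $\sum_{\tau\le t}\sum_s\lambda_{s,\tau}x_{v,s,\tau}(1-G(t-\tau))\le1$ for all $t$; $\mathbf{x}^*\in\arg\max_{\mathbf{x}\in\{\mathbf{x}^*_{LP},\mathbf{x}^*_{AA},\mathbf{x}^*_{SQ}\}}f(\mathbf{x})$.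 SDN policy: set $\beta_{v,1}=1$ and $\beta_{v,t}=1-\sum_{t'=1}^{t-1}\sum_{s=1}^S\lambda_{s,t'}\frac{x^*_{v,s,t'}}{2-q}(1-G(t-t'))$ for $t\ge2$; when a task of type $s$ arrives at time $t$, notify each volunteer $v$ independently with probability $\frac{x^*_{v,s,t}}{(2-q)\beta_{v,t}}$. *)

theory Defs
  imports "HOL-Probability.Probability"
begin

(* Conventions: volunteers v \<in> {..<V}, task types s \<in> {..<S}, periods t \<in> {1..T}.
   lam s t = \<lambda>_{s,t}, p v s = p_{v,s}, g :: nat pmf is the inter-activity distribution
   (supported on the positive integers: pmf g 0 = 0).
   A vector x \<in> R^{V\<times>S\<times>T} is a function x v s t, required to vanish outside the index range. *)

definition Gcdf :: "nat pmf \<Rightarrow> nat \<Rightarrow> real" where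
  "Gcdf g \<tau> = (\<Sum>i\<in>{1..\<tau>}. pmf g i)"

definition hazard :: "nat pmf \<Rightarrow> nat \<Rightarrow> real" where
  "hazard g \<tau> = (if pmf g \<tau> = 0 \<and> 1 - Gcdf g (\<tau> - 1) = 0 then 1
                 else pmf g \<tau> / (1 - Gcdf g (\<tau> - 1)))"

definition mdhr :: "nat pmf \<Rightarrow> real" where
  "mdhr g = (INF \<tau>\<in>{1..}. hazard g \<tau>)"

definition feas1 :: "nat \<Rightarrow> nat \<Rightarrow> (nat \<Rightarrow> nat \<Rightarrow> real) \<Rightarrow> nat pmf \<Rightarrow> (nat \<Rightarrow> nat \<Rightarrow> real) \<Rightarrow> bool" where
  "feas1 S T lam g y \<longleftrightarrow>
     (\<forall>s t. s < S \<and> t \<in> {1..T} \<longrightarrow> 0 \<le> y s t \<and> y s t \<le> 1) \<and>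
     (\<forall>s t. \<not> (s < S \<and> t \<in> {1..T}) \<longrightarrow> y s t = 0) \<and>
     (\<forall>t\<in>{1..T}. (\<Sum>\<tau>=1..t. \<Sum>s<S. lam s \<tau> * y s \<tau> * (1 - Gcdf g (t - \<tau>))) \<le> 1)"

definition feasP :: "nat \<Rightarrow> nat \<Rightarrow> nat \<Rightarrow> (nat \<Rightarrow> nat \<Rightarrow> real) \<Rightarrow> nat pmf \<Rightarrow> (nat \<Rightarrow> nat \<Rightarrow> nat \<Rightarrow> real) set" where
  "feasP V S T lam g = {x. (\<forall>v<V. feas1 S T lam g (x v)) \<and> (\<forall>v. V \<le> v \<longrightarrow> x v = (\<lambda>s t. 0))}"

definition LPobj :: "nat \<Rightarrow> nat \<Rightarrow> nat \<Rightarrow> (nat \<Rightarrow> nat \<Rightarrow> real) \<Rightarrow> (nat \<Rightarrow> nat \<Rightarrow> real) \<Rightarrow> (nat \<Rightarrow> nat \<Rightarrow> nat \<Rightarrow> real) \<Rightarrow> real" where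
  "LPobj V S T lam p x = (\<Sum>t=1..T. \<Sum>s<S. lam s t * min (\<Sum>v<V. x v s t * p v s) 1)"

definition LPval :: "nat \<Rightarrow> nat \<Rightarrow> nat \<Rightarrow> (nat \<Rightarrow> nat \<Rightarrow> real) \<Rightarrow> (nat \<Rightarrow> nat \<Rightarrow> real) \<Rightarrow> nat pmf \<Rightarrow> real" where
  "LPval V S T lam p g = Sup (LPobj V S T lam p ` feasP V S T lam g)"

definition fobj :: "nat \<Rightarrow> nat \<Rightarrow> nat \<Rightarrow> (nat \<Rightarrow> nat \<Rightarrow> real) \<Rightarrow> (nat \<Rightarrow> nat \<Rightarrow> real) \<Rightarrow> (nat \<Rightarrow> nat \<Rightarrow> nat \<Rightarrow> real) \<Rightarrow> real" where
  "fobj V S T lam p x = (\<Sum>t=1..T. \<Sum>s<S. lam s t * (1 - (\<Prod>v<V. 1 - x v s t * p v s)))"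

(* gradient of f (partial derivatives written out; f does not depend on coordinates outside the range) *)
definition gradf :: "nat \<Rightarrow> nat \<Rightarrow> nat \<Rightarrow> (nat \<Rightarrow> nat \<Rightarrow> real) \<Rightarrow> (nat \<Rightarrow> nat \<Rightarrow> real) \<Rightarrow> (nat \<Rightarrow> nat \<Rightarrow> nat \<Rightarrow> real) \<Rightarrow> (nat \<Rightarrow> nat \<Rightarrow> nat \<Rightarrow> real)" where
  "gradf V S T lam p x = (\<lambda>v s t. if v < V \<and> s < S \<and> t \<in> {1..T}
       then lam s t * p v s * (\<Prod>u\<in>{..<V} - {v}. 1 - x u s t * p u s) else 0)"

definition innerp :: "nat \<Rightarrow> nat \<Rightarrow> nat \<Rightarrow> (nat \<Rightarrow> nat \<Rightarrow> nat \<Rightarrow> real) \<Rightarrow> (nat \<Rightarrow> nat \<Rightarrow> nat \<Rightarrow> real) \<Rightarrow> real" where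
  "innerp V S T x y = (\<Sum>v<V. \<Sum>s<S. \<Sum>t=1..T. x v s t * y v s t)"

definition is_LP_opt :: "nat \<Rightarrow> nat \<Rightarrow> nat \<Rightarrow> (nat \<Rightarrow> nat \<Rightarrow> real) \<Rightarrow> (nat \<Rightarrow> nat \<Rightarrow> real) \<Rightarrow> nat pmf \<Rightarrow> (nat \<Rightarrow> nat \<Rightarrow> nat \<Rightarrow> real) \<Rightarrow> bool" where
  "is_LP_opt V S T lam p g x \<longleftrightarrow> x \<in> feasP V S T lam g \<and>
     (\<forall>y\<in>feasP V S T lam g. LPobj V S T lam p y \<le> LPobj V S T lam p x)"

(* x is a possible output of the continuous-greedy-type algorithm AA for some m \<ge> 1 *)
definition is_AA_output :: "nat \<Rightarrow> nat \<Rightarrow> nat \<Rightarrow> (nat \<Rightarrow> nat \<Rightarrow> real) \<Rightarrow> (nat \<Rightarrow> nat \<Rightarrow> real) \<Rightarrow> nat pmf \<Rightarrow> (nat \<Rightarrow> nat \<Rightarrow> nat \<Rightarrow> real) \<Rightarrow> bool" where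
  "is_AA_output V S T lam p g x \<longleftrightarrow>
     (\<exists>m::nat. 1 \<le> m \<and> (\<exists>xs :: nat \<Rightarrow> nat \<Rightarrow> nat \<Rightarrow> nat \<Rightarrow> real.
        xs 0 = (\<lambda>v s t. 0) \<and>
        (\<forall>i\<in>{1..m}. \<exists>y\<in>feasP V S T lam g.
            (\<forall>z\<in>feasP V S T lam g. innerp V S T z (gradf V S T lam p (xs (i - 1)))
                                    \<le> innerp V S T y (gradf V S T lam p (xs (i - 1)))) \<and>
            xs i = (\<lambda>v s t. xs (i - 1) v s t + y v s t / real m)) \<and>
        x = xs m))"

definition sqobj :: "nat \<Rightarrow> nat \<Rightarrow> (nat \<Rightarrow> nat \<Rightarrow> real) \<Rightarrow> (nat \<Rightarrow> nat \<Rightarrow> real) \<Rightarrow> (nat \<Rightarrow> nat \<Rightarrow> nat \<Rightarrow> real) \<Rightarrow> nat \<Rightarrow> (nat \<Rightarrow> nat \<Rightarrow> real) \<Rightarrow> real" where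
  "sqobj S T lam p x v y = (\<Sum>t=1..T. \<Sum>s<S. lam s t * (\<Prod>u<v. 1 - p u s * x u s t) * p v s * y s t)"

definition is_SQ :: "nat \<Rightarrow> nat \<Rightarrow> nat \<Rightarrow> (nat \<Rightarrow> nat \<Rightarrow> real) \<Rightarrow> (nat \<Rightarrow> nat \<Rightarrow> real) \<Rightarrow> nat pmf \<Rightarrow> (nat \<Rightarrow> nat \<Rightarrow> nat \<Rightarrow> real) \<Rightarrow> bool" where
  "is_SQ V S T lam p g x \<longleftrightarrow>
     (\<forall>v<V. feas1 S T lam g (x v) \<and>
        (\<forall>y. feas1 S T lam g y \<longrightarrow> sqobj S T lam p x v y \<le> sqobj S T lam p x v (x v))) \<and>
     (\<forall>v. V \<le> v \<longrightarrow> x v = (\<lambda>s t. 0))"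

definition beta :: "nat \<Rightarrow> (nat \<Rightarrow> nat \<Rightarrow> real) \<Rightarrow> nat pmf \<Rightarrow> (nat \<Rightarrow> nat \<Rightarrow> nat \<Rightarrow> real) \<Rightarrow> nat \<Rightarrow> nat \<Rightarrow> real" where
  "beta S lam g x v t = 1 - (\<Sum>t'=1..t-1. \<Sum>s<S. lam s t' * (x v s t' / (2 - mdhr g)) * (1 - Gcdf g (t - t')))"

definition notif_prob :: "nat \<Rightarrow> (nat \<Rightarrow> nat \<Rightarrow> real) \<Rightarrow> nat pmf \<Rightarrow> (nat \<Rightarrow> nat \<Rightarrow> nat \<Rightarrow> real) \<Rightarrow> nat \<Rightarrow> nat \<Rightarrow> nat \<Rightarrow> real" where
  "notif_prob S lam g x v s t = x v s t / ((2 - mdhr g) * beta S lam g x v t)"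

(* arrival at period t: None = no task, Some s = task of type s *)
definition arrival :: "nat \<Rightarrow> (nat \<Rightarrow> nat \<Rightarrow> real) \<Rightarrow> nat \<Rightarrow> nat option pmf" where
  "arrival S lam t = embed_pmf (\<lambda>a. case a of None \<Rightarrow> 1 - (\<Sum>s<S. lam s t)
                                          | Some s \<Rightarrow> (if s < S then lam s t else 0))"

(* per-volunteer independent randomness: (notified, would respond positively, inter-activity time Z) *)
definition vol_outcome :: "real \<Rightarrow> real \<Rightarrow> nat pmf \<Rightarrow> (bool \<times> bool \<times> nat) pmf" where
  "vol_outcome pn pr g =
     bind_pmf (bernoulli_pmf pn) (\<lambda>n. bind_pmf (bernoulli_pmf pr) (\<lambda>a. map_pmf (\<lambda>z. (n, a, z)) g))"

(* State: (r, c) where volunteer v is active at period t iff r v \<le> t, and c counts completed tasks. *)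
definition sdn_step :: "nat \<Rightarrow> nat \<Rightarrow> (nat \<Rightarrow> nat \<Rightarrow> real) \<Rightarrow> (nat \<Rightarrow> nat \<Rightarrow> real) \<Rightarrow> nat pmf
    \<Rightarrow> (nat \<Rightarrow> nat \<Rightarrow> nat \<Rightarrow> real) \<Rightarrow> nat \<Rightarrow> (nat \<Rightarrow> nat) \<times> nat \<Rightarrow> ((nat \<Rightarrow> nat) \<times> nat) pmf" where
  "sdn_step V S lam p g x t rc = (case rc of (r, c) \<Rightarrow>
     bind_pmf (arrival S lam t) (\<lambda>a. case a of
        None \<Rightarrow> return_pmf (r, c)
      | Some s \<Rightarrow> map_pmf (\<lambda>\<omega>.
           (\<lambda>v. if v < V \<and> r v \<le> t \<and> fst (\<omega> v) then t + snd (snd (\<omega> v)) else r v,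
            c + (if \<exists>v<V. r v \<le> t \<and> fst (\<omega> v) \<and> fst (snd (\<omega> v)) then 1 else 0)))
          (Pi_pmf {..<V} (False, False, 0) (\<lambda>v. vol_outcome (notif_prob S lam g x v s t) (p v s) g))))"

primrec sdn_run :: "nat \<Rightarrow> nat \<Rightarrow> (nat \<Rightarrow> nat \<Rightarrow> real) \<Rightarrow> (nat \<Rightarrow> nat \<Rightarrow> real) \<Rightarrow> nat pmf
    \<Rightarrow> (nat \<Rightarrow> nat \<Rightarrow> nat \<Rightarrow> real) \<Rightarrow> nat \<Rightarrow> ((nat \<Rightarrow> nat) \<times> nat) pmf" where
  "sdn_run V S lam p g x 0 = return_pmf (\<lambda>v. 0, 0)"
| "sdn_run V S lam p g x (Suc t) = bind_pmf (sdn_run V S lam p g x t) (sdn_step V S lam p g x (Suc t))"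

definition SDN_value :: "nat \<Rightarrow> nat \<Rightarrow> nat \<Rightarrow> (nat \<Rightarrow> nat \<Rightarrow> real) \<Rightarrow> (nat \<Rightarrow> nat \<Rightarrow> real) \<Rightarrow> nat pmf
    \<Rightarrow> (nat \<Rightarrow> nat \<Rightarrow> nat \<Rightarrow> real) \<Rightarrow> real" where
  "SDN_value V S T lam p g x = measure_pmf.expectation (sdn_run V S lam p g x T) (\<lambda>rc. real (snd rc))"

end

theory Submission
  imports Defs
begin

text \<open>
  SDN is calibrated so that volunteer v is active at period t with probability exactly
  beta v t. Indeed, an active volunteer is notified with probability x/((2 - q) beta), so
  "active and notified" has probability x/(2 - q), and by induction over the periods the
  probability that v is still inactive at period u after the first k periods is
  load (x v) k u / (2 - q). The hazard bound 1 - G(k + 1) <= (1 - q) (1 - G k) and the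
  constraint of P give beta >= 1/(2 - q), so the notification probabilities are at most x.

  Given the activity states, the completion probability 1 - prod (1 - [v active] pi p) is at
  least sum_v [v active] pi p prod_{u<v} (1 - x_u p_u), which is linear in the activity
  indicators; its expectation only involves the marginals beta and equals
  f(x)/(2 - q) per period. Finally f(x*) >= f(x_LP) >= (1 - 1/e) LP by 1 - a <= e^-a and
  concavity of 1 - e^-a, and x* is feasible since the AA output is an average of feasible
  points.
\<close>

section \<open>Expectations over probability mass functions\<close>

lemma integrable_measure_pmf_bounded:
  fixes f :: "'a \<Rightarrow> real"
  assumes "\<And>y. y \<in> set_pmf M \<Longrightarrow> \<bar>f y\<bar> \<le> B"
  shows "integrable (measure_pmf M) f"
  by (rule measure_pmf.integrable_const_bound[where B = B]) (auto simp: AE_measure_pmf_iff assms)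

lemma integrable_of_bool_pmf: "integrable (measure_pmf M) (\<lambda>y. of_bool (P y) :: real)"
  by (rule integrable_measure_pmf_bounded[where B = 1]) simp

lemma expectation_bind_pmf:
  fixes f :: "'b \<Rightarrow> real"
  assumes bounded: "\<And>y. y \<in> set_pmf (bind_pmf M N) \<Longrightarrow> \<bar>f y\<bar> \<le> B"
  shows "measure_pmf.expectation (bind_pmf M N) f =
         measure_pmf.expectation M (\<lambda>x. measure_pmf.expectation (N x) f)"
proof -
  \<comment> \<open>\<open>integral_bind\<close> needs a bound everywhere, so clip \<open>f\<close> outside the support first.\<close>
  define h where "h = (\<lambda>y. max (- \<bar>B\<bar>) (min \<bar>B\<bar> (f y)))"
  have h_bounded: "\<bar>h y\<bar> \<le> \<bar>B\<bar>" for y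
    unfolding h_def by auto
  have f_eq_h: "f y = h y" if "y \<in> set_pmf (bind_pmf M N)" for y
    using bounded[OF that] unfolding h_def by linarith
  have "measure_pmf.expectation (bind_pmf M N) f = measure_pmf.expectation (bind_pmf M N) h"
    by (intro integral_cong_AE) (auto simp: AE_measure_pmf_iff f_eq_h)
  also have "\<dots> = measure_pmf.expectation M (\<lambda>x. measure_pmf.expectation (N x) h)"
    unfolding measure_pmf_bind
    by (rule integral_bind[where K = "count_space UNIV" and B = "\<bar>B\<bar>" and B' = 1])
       (auto simp: h_bounded measure_pmf_in_subprob_algebra)
  also have "\<dots> = measure_pmf.expectation M (\<lambda>x. measure_pmf.expectation (N x) f)"
    by (intro integral_cong_AE) (force simp: AE_measure_pmf_iff intro!: integral_cong_AE f_eq_h[symmetric])+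
  finally show ?thesis .
qed

lemma expectation_Pi_pmf_component:
  fixes F :: "'b \<Rightarrow> real"
  assumes "finite A" "v \<in> A"
  shows "measure_pmf.expectation (Pi_pmf A d P) (\<lambda>\<omega>. F (\<omega> v)) = measure_pmf.expectation (P v) F"
proof -
  have "map_pmf (\<lambda>\<omega>. \<omega> v) (Pi_pmf A d P) = P v"
    using assms by (simp add: Pi_pmf_component)
  then show ?thesis
    by (metis integral_map_pmf)
qed

lemma expectation_of_bool_not:
  "measure_pmf.expectation M (\<lambda>y. of_bool (\<not> P y) :: real) =
   1 - measure_pmf.expectation M (\<lambda>y. of_bool (P y))"
proof -
  have "measure_pmf.expectation M (\<lambda>y. 1 - of_bool (P y) :: real) =
        1 - measure_pmf.expectation M (\<lambda>y. of_bool (P y))"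
    by (simp add: Bochner_Integration.integral_diff integrable_of_bool_pmf)
  moreover have "(\<lambda>y. of_bool (\<not> P y) :: real) = (\<lambda>y. 1 - of_bool (P y))"
    by auto
  ultimately show ?thesis
    by simp
qed

section \<open>Inter-activity times and the minimum hazard rate\<close>

lemma Gcdf_Suc: "Gcdf g (Suc k) = Gcdf g k + pmf g (Suc k)"
  by (simp add: Gcdf_def)

lemma Gcdf_eq_prob: "Gcdf g k = measure_pmf.prob g {1..k}"
  by (simp add: Gcdf_def measure_measure_pmf_finite)

lemma Gcdf_le_1: "Gcdf g k \<le> 1"
  unfolding Gcdf_eq_prob by simp

lemma expectation_survival:
  assumes "pmf g 0 = 0"
  shows "measure_pmf.expectation g (\<lambda>z. of_bool (k < z)) = 1 - Gcdf g k"
proof -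
  have "measure_pmf.prob g {..k} = measure_pmf.prob g {1..k}"
    by (rule measure_prob_cong_0) (use assms in \<open>auto simp: not_less_eq_eq\<close>)
  moreover have "measure_pmf.prob g {z. k < z} = 1 - measure_pmf.prob g {..k}"
    by (subst measure_pmf.prob_compl[symmetric]) (auto intro!: arg_cong[where f = "measure_pmf.prob g"])
  moreover have "(\<lambda>z. of_bool (k < z) :: real) = indicator {z. k < z}"
    by (auto simp: indicator_def)
  ultimately show ?thesis
    by (simp add: Gcdf_eq_prob)
qed

lemma hazard_nonneg: "0 \<le> hazard g k"
  unfolding hazard_def using Gcdf_le_1[of g "k - 1"] by auto

lemma mdhr_le_hazard: "1 \<le> k \<Longrightarrow> mdhr g \<le> hazard g k"
  unfolding mdhr_def by (rule cINF_lower) (auto intro: bdd_belowI2[where m = 0] hazard_nonneg)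

lemma mdhr_le_1: "mdhr g \<le> 1"
  using mdhr_le_hazard[of 1 g] pmf_le_1[of g 1] by (simp add: hazard_def Gcdf_def)

lemma survival_Suc_le:
  "1 - Gcdf g (Suc k) \<le> (1 - mdhr g) * (1 - Gcdf g k)"
proof (cases "Gcdf g k = 1")
  case True
  then show ?thesis
    using Gcdf_le_1[of g "Suc k"] Gcdf_Suc[of g k] by simp
next
  case False
  then have "0 < 1 - Gcdf g k"
    using Gcdf_le_1[of g k] by linarith
  moreover have "mdhr g \<le> pmf g (Suc k) / (1 - Gcdf g k)"
    using mdhr_le_hazard[of "Suc k" g] False by (simp add: hazard_def)
  ultimately show ?thesis
    by (simp add: Gcdf_Suc field_simps)
qed

text \<open>
  With y = x v / (2 - q), load y k u is the probability that v is still inactive at period u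
  because of a notification in periods 1..k; load y t t is the left-hand side of the
  constraint of P.
\<close>

definition load :: "nat \<Rightarrow> (nat \<Rightarrow> nat \<Rightarrow> real) \<Rightarrow> nat pmf \<Rightarrow> (nat \<Rightarrow> nat \<Rightarrow> real) \<Rightarrow> nat \<Rightarrow> nat \<Rightarrow> real"
  where "load S lam g y k u = (\<Sum>\<tau>=1..k. \<Sum>s<S. lam s \<tau> * y s \<tau> * (1 - Gcdf g (u - \<tau>)))"

lemma feas1_iff_load:
  "feas1 S T lam g y \<longleftrightarrow>
     (\<forall>s t. s < S \<and> t \<in> {1..T} \<longrightarrow> 0 \<le> y s t \<and> y s t \<le> 1) \<and>
     (\<forall>s t. \<not> (s < S \<and> t \<in> {1..T}) \<longrightarrow> y s t = 0) \<and>
     (\<forall>t\<in>{1..T}. load S lam g y t t \<le> 1)"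
  unfolding feas1_def load_def ..

lemma beta_eq_load: "beta S lam g x v t = 1 - load S lam g (x v) (t - 1) t / (2 - mdhr g)"
  unfolding beta_def load_def by (simp add: sum_divide_distrib)

lemma load_Suc_right:
  "load S lam g y (Suc k) u = load S lam g y k u + (\<Sum>s<S. lam s (Suc k) * y s (Suc k) * (1 - Gcdf g (u - Suc k)))"
  unfolding load_def by simp

lemma load_Suc_le:
  assumes nonneg: "\<And>s \<tau>. s < S \<Longrightarrow> \<tau> \<in> {1..k} \<Longrightarrow> 0 \<le> lam s \<tau> * y s \<tau>" and "k \<le> u"
  shows "load S lam g y k (Suc u) \<le> (1 - mdhr g) * load S lam g y k u"
  unfolding load_def sum_distrib_left
proof (intro sum_mono)
  fix \<tau> s assume \<tau>: "\<tau> \<in> {1..k}" and s: "s \<in> {..<S}"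
  have "Suc u - \<tau> = Suc (u - \<tau>)"
    using \<tau> \<open>k \<le> u\<close> by (simp add: Suc_diff_le)
  then have "1 - Gcdf g (Suc u - \<tau>) \<le> (1 - mdhr g) * (1 - Gcdf g (u - \<tau>))"
    using survival_Suc_le by simp
  then have "lam s \<tau> * y s \<tau> * (1 - Gcdf g (Suc u - \<tau>)) \<le> lam s \<tau> * y s \<tau> * ((1 - mdhr g) * (1 - Gcdf g (u - \<tau>)))"
    using nonneg \<tau> s by (intro mult_left_mono) auto
  then show "lam s \<tau> * y s \<tau> * (1 - Gcdf g (Suc u - \<tau>)) \<le> (1 - mdhr g) * (lam s \<tau> * y s \<tau> * (1 - Gcdf g (u - \<tau>)))"
    by (simp add: mult_ac)
qed

section \<open>Products of complementary probabilities\<close>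

lemma of_bool_ex_eq_one_minus_prod:
  "(of_bool (\<exists>v<(n::nat). A v) :: real) = 1 - (\<Prod>v<n. 1 - of_bool (A v))"
proof (induction n)
  case (Suc n)
  have "(\<exists>v<Suc n. A v) \<longleftrightarrow> (\<exists>v<n. A v) \<or> A n"
    by (auto simp: less_Suc_eq)
  with Suc.IH show ?case
    by (cases "A n") auto
qed simp

lemma one_minus_prod_eq_sum:
  "1 - (\<Prod>v<(n::nat). 1 - w v) = (\<Sum>v<n. w v * (\<Prod>u<v. 1 - w u :: real))"
  by (induction n) (auto simp: algebra_simps)

lemma sum_le_one_minus_prod:
  assumes "\<And>v. v < n \<Longrightarrow> 0 \<le> z v \<and> z v \<le> w v \<and> w v \<le> (1::real)"
  shows "(\<Sum>v<(n::nat). z v * (\<Prod>u<v. 1 - w u)) \<le> 1 - (\<Prod>v<n. 1 - z v)"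
  using assms
proof (induction n)
  case 0
  then show ?case by simp
next
  case (Suc n)
  have "(\<Prod>u<n. 1 - w u) \<le> (\<Prod>u<n. 1 - z u)"
    using Suc.prems by (intro prod_mono) auto
  then have "z n * (\<Prod>u<n. 1 - w u) \<le> z n * (\<Prod>u<n. 1 - z u)"
    using Suc.prems by (intro mult_left_mono) auto
  then show ?case
    using Suc by (simp add: algebra_simps)
qed

lemma one_minus_exp_min_le:
  assumes "0 \<le> (a::real)"
  shows "(1 - exp (-1)) * min a 1 \<le> 1 - exp (- a)"
proof (cases "a \<le> 1")
  case True
  have "exp ((1 - a) *\<^sub>R 0 + a *\<^sub>R (-1)) \<le> (1 - a) * exp 0 + a * exp (-1)"
    using convex_onD[OF exp_convex, of a 0 "-1"] True assms by auto
  then show ?thesis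
    using True by (simp add: algebra_simps)
qed simp

lemma one_minus_prod_ge_min_sum:
  assumes "\<And>v. v < (n::nat) \<Longrightarrow> 0 \<le> a v \<and> a v \<le> (1::real)"
  shows "(1 - exp (-1)) * min (\<Sum>v<n. a v) 1 \<le> 1 - (\<Prod>v<n. 1 - a v)"
proof -
  have "(\<Prod>v<n. 1 - a v) \<le> (\<Prod>v<n. exp (- a v))"
    using assms exp_minus_ge by (intro prod_mono) auto
  also have "\<dots> = exp (- (\<Sum>v<n. a v))"
    by (simp add: exp_sum flip: sum_negf)
  moreover have "0 \<le> (\<Sum>v<n. a v)"
    using assms by (intro sum_nonneg) auto
  ultimately show ?thesis
    using one_minus_exp_min_le[of "\<Sum>v<n. a v"] by linarith
qed

section \<open>Feasible solutions and the ex ante objective\<close>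

definition scaled_feasible :: "nat \<Rightarrow> nat \<Rightarrow> nat \<Rightarrow> (nat \<Rightarrow> nat \<Rightarrow> real) \<Rightarrow> nat pmf \<Rightarrow> real
    \<Rightarrow> (nat \<Rightarrow> nat \<Rightarrow> nat \<Rightarrow> real) \<Rightarrow> bool" where
  "scaled_feasible V S T lam g c z \<longleftrightarrow> (\<forall>v. V \<le> v \<longrightarrow> z v = (\<lambda>s t. 0)) \<and>
     (\<forall>v<V. (\<forall>s t. \<not> (s < S \<and> t \<in> {1..T}) \<longrightarrow> z v s t = 0) \<and>
            (\<forall>s t. s < S \<and> t \<in> {1..T} \<longrightarrow> 0 \<le> z v s t \<and> z v s t \<le> c) \<and>
            (\<forall>t\<in>{1..T}. load S lam g (z v) t t \<le> c))"

lemma feasP_iff_scaled_feasible_1: "z \<in> feasP V S T lam g \<longleftrightarrow> scaled_feasible V S T lam g 1 z"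
  unfolding feasP_def feas1_iff_load scaled_feasible_def by auto

lemma load_add_scaled:
  "load S lam g (\<lambda>s t. y s t + a * z s t) k u = load S lam g y k u + a * load S lam g z k u"
  unfolding load_def sum_distrib_left sum.distrib[symmetric] by (simp add: algebra_simps)

lemma scaled_feasible_add_scaled:
  assumes y: "scaled_feasible V S T lam g c y" and z: "scaled_feasible V S T lam g d z" and "0 \<le> a"
  shows "scaled_feasible V S T lam g (c + a * d) (\<lambda>v s t. y v s t + a * z v s t)"
  unfolding scaled_feasible_def
proof (intro conjI allI impI ballI)
  fix v s t assume "v < V" "s < S \<and> t \<in> {1..T}"
  then have "0 \<le> y v s t" "y v s t \<le> c" "0 \<le> z v s t" "z v s t \<le> d"
    using y z unfolding scaled_feasible_def by auto
  then show "0 \<le> y v s t + a * z v s t" "y v s t + a * z v s t \<le> c + a * d"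
    using \<open>0 \<le> a\<close> by (auto intro: add_mono mult_left_mono)
next
  fix v t assume "v < V" "t \<in> {1..T}"
  then have "load S lam g (y v) t t \<le> c" "load S lam g (z v) t t \<le> d"
    using y z unfolding scaled_feasible_def by auto
  then show "load S lam g (\<lambda>s t. y v s t + a * z v s t) t t \<le> c + a * d"
    unfolding load_add_scaled using \<open>0 \<le> a\<close> by (auto intro: add_mono mult_left_mono)
qed (use y z in \<open>auto simp: scaled_feasible_def\<close>)

lemma AA_output_feasible:
  assumes "is_AA_output V S T lam p g x"
  shows "x \<in> feasP V S T lam g"
proof -
  obtain m xs where m: "1 \<le> m" and xs_0: "xs 0 = (\<lambda>v s t. 0)" and x: "x = xs m"
    and xs_step: "\<And>i. i \<in> {1..m} \<Longrightarrow> \<exists>y\<in>feasP V S T lam g. xs i = (\<lambda>v s t. xs (i - 1) v s t + y v s t / real m)"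
    using assms unfolding is_AA_output_def by blast
  have "scaled_feasible V S T lam g (real i / real m) (xs i)" if "i \<le> m" for i
    using that
  proof (induction i)
    case 0
    then show ?case
      unfolding xs_0 scaled_feasible_def load_def by simp
  next
    case (Suc i)
    obtain y where y: "scaled_feasible V S T lam g 1 y"
      and xs_Suc: "xs (Suc i) = (\<lambda>v s t. xs i v s t + y v s t / real m)"
      using xs_step[of "Suc i"] Suc.prems by (auto simp: feasP_iff_scaled_feasible_1)
    have "scaled_feasible V S T lam g (real i / real m + 1 / real m * 1) (\<lambda>v s t. xs i v s t + 1 / real m * y v s t)"
      using Suc y by (intro scaled_feasible_add_scaled) auto
    then show ?case
      by (simp add: xs_Suc add_divide_distrib add.commute)
  qed
  from this[of m] show ?thesis
    using m by (simp add: x feasP_iff_scaled_feasible_1)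
qed

lemma LPval_eq_LPobj:
  assumes "is_LP_opt V S T lam p g x"
  shows "LPval V S T lam p g = LPobj V S T lam p x"
  unfolding LPval_def using assms unfolding is_LP_opt_def by (intro cSup_eq_maximum) auto

lemma LPobj_le_fobj:
  assumes x: "x \<in> feasP V S T lam g" and lam_nonneg: "\<forall>s<S. \<forall>t\<in>{1..T}. 0 \<le> lam s t"
    and p_range: "\<forall>v<V. \<forall>s<S. 0 \<le> p v s \<and> p v s \<le> 1"
  shows "(1 - exp (-1)) * LPobj V S T lam p x \<le> fobj V S T lam p x"
  unfolding LPobj_def fobj_def sum_distrib_left
proof (intro sum_mono)
  fix t s assume t: "t \<in> {1..T}" and s: "s \<in> {..<S}"
  have "0 \<le> x v s t * p v s \<and> x v s t * p v s \<le> 1" if "v < V" for v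
  proof -
    have "0 \<le> x v s t" "x v s t \<le> 1"
      using x that s t unfolding feasP_def feas1_def by auto
    moreover have "0 \<le> p v s" "p v s \<le> 1"
      using p_range that s by auto
    ultimately show ?thesis
      by (auto intro: mult_le_one)
  qed
  then have "(1 - exp (-1)) * min (\<Sum>v<V. x v s t * p v s) 1 \<le> 1 - (\<Prod>v<V. 1 - x v s t * p v s)"
    by (rule one_minus_prod_ge_min_sum)
  then show "(1 - exp (-1)) * (lam s t * min (\<Sum>v<V. x v s t * p v s) 1) \<le> lam s t * (1 - (\<Prod>v<V. 1 - x v s t * p v s))"
    using lam_nonneg s t mult_left_mono[of _ _ "lam s t"] by (simp add: mult.left_commute)
qed

section \<open>The SDN policy\<close>

lemma expectation_arrival:
  assumes lam_nonneg: "\<forall>s<S. 0 \<le> lam s t" and lam_sum: "(\<Sum>s<S. lam s t) \<le> 1"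
  shows "measure_pmf.expectation (arrival S lam t) (F :: nat option \<Rightarrow> real) =
     (1 - (\<Sum>s<S. lam s t)) * F None + (\<Sum>s<S. lam s t * F (Some s))"
proof -
  define f where "f = (\<lambda>a. case a of None \<Rightarrow> 1 - (\<Sum>s<S. lam s t)
                                    | Some s \<Rightarrow> (if s < S then lam s t else 0))"
  define A where "A = insert None (Some ` {..<S})"
  have sum_A: "(\<Sum>a\<in>A. h a) = h None + (\<Sum>s<S. h (Some s))" for h :: "nat option \<Rightarrow> 'b::comm_monoid_add"
    unfolding A_def by (simp add: sum.reindex)
  have f_nonneg: "0 \<le> f a" for a
    using lam_nonneg lam_sum by (auto simp: f_def split: option.splits)
  have f_outside: "f a = 0" if "a \<notin> A" for a
    using that by (auto simp: f_def A_def split: option.splits)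
  have "(\<integral>\<^sup>+a. ennreal (f a) \<partial>count_space UNIV) = ennreal (\<Sum>a\<in>A. f a)"
    by (subst nn_integral_count_space'[where A = A])
       (auto simp: A_def f_outside f_nonneg sum_ennreal)
  also have "(\<Sum>a\<in>A. f a) = 1"
    unfolding sum_A by (simp add: f_def)
  finally have pmf_arrival: "pmf (arrival S lam t) a = f a" for a
    unfolding arrival_def f_def[symmetric] by (simp add: pmf_embed_pmf f_nonneg)
  have "measure_pmf.expectation (arrival S lam t) F = (\<Sum>a\<in>A. F a * pmf (arrival S lam t) a)"
    by (rule integral_measure_pmf_real) (auto simp: A_def set_pmf_eq pmf_arrival f_def split: option.splits if_splits)
  also have "\<dots> = (1 - (\<Sum>s<S. lam s t)) * F None + (\<Sum>s<S. lam s t * F (Some s))"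
    unfolding sum_A pmf_arrival by (simp add: f_def mult.commute)
  finally show ?thesis .
qed

lemma expectation_vol_outcome:
  fixes F :: "bool \<times> bool \<times> nat \<Rightarrow> real"
  assumes "0 \<le> pn" "pn \<le> 1" "0 \<le> pr" "pr \<le> 1" and bounded: "\<And>y. \<bar>F y\<bar> \<le> B"
  shows "measure_pmf.expectation (vol_outcome pn pr g) F =
    pn * (pr * measure_pmf.expectation g (\<lambda>z. F (True, True, z))
          + (1 - pr) * measure_pmf.expectation g (\<lambda>z. F (True, False, z)))
  + (1 - pn) * (pr * measure_pmf.expectation g (\<lambda>z. F (False, True, z))
          + (1 - pr) * measure_pmf.expectation g (\<lambda>z. F (False, False, z)))"
  unfolding vol_outcome_def
  using assms by (simp add: expectation_bind_pmf[where B = B] algebra_simps)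

locale sdn_instance =
  fixes V S T :: nat and lam p :: "nat \<Rightarrow> nat \<Rightarrow> real" and g :: "nat pmf"
    and x :: "nat \<Rightarrow> nat \<Rightarrow> nat \<Rightarrow> real"
  assumes lam_nonneg: "\<forall>s<S. \<forall>t\<in>{1..T}. 0 \<le> lam s t"
    and lam_sum: "\<forall>t\<in>{1..T}. (\<Sum>s<S. lam s t) \<le> 1"
    and p_range: "\<forall>v<V. \<forall>s<S. 0 \<le> p v s \<and> p v s \<le> 1"
    and g_pos: "pmf g 0 = 0"
    and x_feasible: "x \<in> feasP V S T lam g"
begin

abbreviation \<kappa> :: real where "\<kappa> \<equiv> 2 - mdhr g"
abbreviation "nf v s t \<equiv> notif_prob S lam g x v s t"
abbreviation "run k \<equiv> sdn_run V S lam p g x k"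
abbreviation "step t \<equiv> sdn_step V S lam p g x t"

lemma kappa_ge_1: "1 \<le> \<kappa>"
  using mdhr_le_1[of g] by simp

lemma x_nonneg_le_1: "v < V \<Longrightarrow> 0 \<le> x v s t \<and> x v s t \<le> 1"
  using x_feasible unfolding feasP_def feas1_def by (cases "s < S \<and> t \<in> {1..T}") auto

lemma x_outside: "v < V \<Longrightarrow> \<not> (s < S \<and> t \<in> {1..T}) \<Longrightarrow> x v s t = 0"
  using x_feasible unfolding feasP_def feas1_def by auto

lemma load_x_le_1: "v < V \<Longrightarrow> t \<in> {1..T} \<Longrightarrow> load S lam g (x v) t t \<le> 1"
  using x_feasible unfolding feasP_def feas1_iff_load by auto

lemma lam_x_nonneg: "v < V \<Longrightarrow> s < S \<Longrightarrow> t \<in> {1..T} \<Longrightarrow> 0 \<le> lam s t * x v s t"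
  using lam_nonneg x_nonneg_le_1[of v s t] by auto

lemma load_before_le:
  assumes v: "v < V" and t: "t \<in> {1..T}"
  shows "load S lam g (x v) (t - 1) t \<le> 1 - mdhr g"
proof (cases "t = 1")
  case True
  then show ?thesis
    using mdhr_le_1[of g] by (simp add: load_def)
next
  case False
  then have t_eq: "t = Suc (t - 1)" and t': "t - 1 \<in> {1..T}"
    using t by auto
  have "load S lam g (x v) (t - 1) t \<le> (1 - mdhr g) * load S lam g (x v) (t - 1) (t - 1)"
    using t' v by (subst t_eq, intro load_Suc_le lam_x_nonneg) auto
  also have "\<dots> \<le> (1 - mdhr g) * 1"
    using load_x_le_1[OF v t'] mdhr_le_1[of g] by (intro mult_left_mono) auto
  finally show ?thesis
    by simp
qed

lemma beta_ge: "v < V \<Longrightarrow> t \<in> {1..T} \<Longrightarrow> 1 / \<kappa> \<le> beta S lam g x v t"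
  using load_before_le[of v t] kappa_ge_1
  by (simp add: beta_eq_load field_simps)

lemma beta_pos: "v < V \<Longrightarrow> t \<in> {1..T} \<Longrightarrow> 0 < beta S lam g x v t"
  using beta_ge[of v t] kappa_ge_1 by (auto intro: less_le_trans[of 0 "1 / \<kappa>"])

lemma beta_mult_notif_prob:
  "v < V \<Longrightarrow> t \<in> {1..T} \<Longrightarrow> beta S lam g x v t * nf v s t = x v s t / \<kappa>"
  using beta_pos[of v t] kappa_ge_1 unfolding notif_prob_def by simp

lemma notif_prob_nonneg_le:
  assumes "v < V"
  shows "0 \<le> nf v s t \<and> nf v s t \<le> x v s t"
proof (cases "s < S \<and> t \<in> {1..T}")
  case True
  then have "1 \<le> \<kappa> * beta S lam g x v t"
    using beta_ge[OF assms] kappa_ge_1 by (simp add: field_simps)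
  moreover have "0 \<le> x v s t"
    using x_nonneg_le_1[OF assms] by simp
  ultimately have "x v s t / (\<kappa> * beta S lam g x v t) \<le> x v s t / 1"
    by (intro divide_left_mono) auto
  then show ?thesis
    using \<open>0 \<le> x v s t\<close> \<open>1 \<le> \<kappa> * beta S lam g x v t\<close> by (simp add: notif_prob_def)
qed (simp add: notif_prob_def x_outside[OF assms])

lemma notif_prob_le_1: "v < V \<Longrightarrow> nf v s t \<le> 1"
  using notif_prob_nonneg_le[of v s t] x_nonneg_le_1[of v s t] by linarith

definition notify_pmf :: "nat \<Rightarrow> nat \<Rightarrow> (nat \<Rightarrow> bool \<times> bool \<times> nat) pmf" where
  "notify_pmf s t = Pi_pmf {..<V} (False, False, 0) (\<lambda>v. vol_outcome (nf v s t) (p v s) g)"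

definition reactivation :: "(nat \<Rightarrow> nat) \<Rightarrow> nat \<Rightarrow> (nat \<Rightarrow> bool \<times> bool \<times> nat) \<Rightarrow> nat \<Rightarrow> nat" where
  "reactivation r t \<omega> = (\<lambda>v. if v < V \<and> r v \<le> t \<and> fst (\<omega> v) then t + snd (snd (\<omega> v)) else r v)"

definition task_completed :: "(nat \<Rightarrow> nat) \<Rightarrow> nat \<Rightarrow> (nat \<Rightarrow> bool \<times> bool \<times> nat) \<Rightarrow> bool" where
  "task_completed r t \<omega> \<longleftrightarrow> (\<exists>v<V. r v \<le> t \<and> fst (\<omega> v) \<and> fst (snd (\<omega> v)))"

definition completion_prob :: "(nat \<Rightarrow> nat) \<Rightarrow> nat \<Rightarrow> real" where
  "completion_prob r t = (\<Sum>s<S. lam s t * (1 - (\<Prod>v<V. 1 - of_bool (r v \<le> t) * nf v s t * p v s)))"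

lemma sdn_step_eq:
  "step t (r, c) = bind_pmf (arrival S lam t) (\<lambda>a. case a of
      None \<Rightarrow> return_pmf (r, c)
    | Some s \<Rightarrow> map_pmf (\<lambda>\<omega>. (reactivation r t \<omega>, c + of_bool (task_completed r t \<omega>))) (notify_pmf s t))"
  unfolding sdn_step_def notify_pmf_def reactivation_def task_completed_def of_bool_def by simp

lemma count_le_sdn_run: "y \<in> set_pmf (run k) \<Longrightarrow> snd y \<le> k"
proof (induction k arbitrary: y)
  case (Suc k)
  then obtain r c where "(r, c) \<in> set_pmf (run k)" and "y \<in> set_pmf (step (Suc k) (r, c))"
    by auto
  then show ?case
    using Suc.IH by (fastforce simp: sdn_step_eq split: option.splits)
qed simp

lemma expectation_sdn_step:
  assumes t: "t \<in> {1..T}" and bounded: "\<And>y. y \<in> set_pmf (step t (r, c)) \<Longrightarrow> \<bar>H y\<bar> \<le> B"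
  shows "measure_pmf.expectation (step t (r, c)) H =
     (1 - (\<Sum>s<S. lam s t)) * H (r, c) +
     (\<Sum>s<S. lam s t * measure_pmf.expectation (notify_pmf s t)
                         (\<lambda>\<omega>. H (reactivation r t \<omega>, c + of_bool (task_completed r t \<omega>))))"
  unfolding sdn_step_eq
  using bounded lam_nonneg lam_sum t
  by (subst expectation_bind_pmf[where B = B]) (auto simp: sdn_step_eq expectation_arrival)

lemma expectation_inactive_notify:
  assumes "s < S" "v < V" "t \<le> u"
  shows "measure_pmf.expectation (notify_pmf s t) (\<lambda>\<omega>. of_bool (u < reactivation r t \<omega> v)) =
    (if r v \<le> t then nf v s t * (1 - Gcdf g (u - t)) else of_bool (u < r v))"
proof -
  have survival: "measure_pmf.expectation g (\<lambda>z. of_bool (u < z + t)) = 1 - Gcdf g (u - t)"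
    using expectation_survival[OF g_pos, of "u - t"] \<open>t \<le> u\<close> by (simp add: less_diff_conv2)
  define \<psi> where "\<psi> oc = (of_bool (u < (if r v \<le> t \<and> fst oc then t + snd (snd oc) else r v)) :: real)"
    for oc :: "bool \<times> bool \<times> nat"
  have "measure_pmf.expectation (notify_pmf s t) (\<lambda>\<omega>. of_bool (u < reactivation r t \<omega> v)) =
        measure_pmf.expectation (notify_pmf s t) (\<lambda>\<omega>. \<psi> (\<omega> v))"
    unfolding reactivation_def \<psi>_def using assms by simp
  also have "\<dots> = measure_pmf.expectation (vol_outcome (nf v s t) (p v s) g) \<psi>"
    unfolding notify_pmf_def using assms by (intro expectation_Pi_pmf_component) auto
  also have "\<dots> = (if r v \<le> t then nf v s t * (1 - Gcdf g (u - t)) else of_bool (u < r v))"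
    using notif_prob_nonneg_le[of v s t] notif_prob_le_1[of v s t] p_range assms
    by (subst expectation_vol_outcome[where B = 1]) (auto simp: \<psi>_def survival algebra_simps)
  finally show ?thesis .
qed

lemma expectation_completed_notify:
  assumes "s < S"
  shows "measure_pmf.expectation (notify_pmf s t) (\<lambda>\<omega>. of_bool (task_completed r t \<omega>)) =
    1 - (\<Prod>v<V. 1 - of_bool (r v \<le> t) * nf v s t * p v s)"
proof -
  define f where "f v oc = (1 - of_bool (r v \<le> t \<and> fst oc \<and> fst (snd oc)) :: real)" for v and oc :: "bool \<times> bool \<times> nat"
  have f_bounds: "0 \<le> f v oc \<and> f v oc \<le> 1" for v oc
    by (simp add: f_def)
  have "measure_pmf.expectation (notify_pmf s t) (\<lambda>\<omega>. \<Prod>v<V. f v (\<omega> v)) =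
        (\<Prod>v<V. measure_pmf.expectation (vol_outcome (nf v s t) (p v s) g) (f v))"
    unfolding notify_pmf_def using f_bounds
    by (intro expectation_prod_Pi_pmf) (auto intro: integrable_measure_pmf_bounded[where B = 1])
  also have "\<dots> = (\<Prod>v<V. 1 - of_bool (r v \<le> t) * nf v s t * p v s)"
    using notif_prob_nonneg_le notif_prob_le_1 p_range assms
    by (intro prod.cong refl, subst expectation_vol_outcome[where B = 1])
       (auto simp: f_def algebra_simps)
  moreover have "of_bool (task_completed r t \<omega>) = 1 - (\<Prod>v<V. f v (\<omega> v))" for \<omega>
    unfolding task_completed_def f_def by (subst of_bool_ex_eq_one_minus_prod) simp
  moreover have "measure_pmf.expectation (notify_pmf s t) (\<lambda>\<omega>. 1 - (\<Prod>v<V. f v (\<omega> v))) =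
        1 - measure_pmf.expectation (notify_pmf s t) (\<lambda>\<omega>. \<Prod>v<V. f v (\<omega> v))"
    by (subst Bochner_Integration.integral_diff)
       (auto intro!: integrable_measure_pmf_bounded[where B = 1] prod_le_1 simp: abs_prod f_def)
  ultimately show ?thesis
    by simp
qed

lemma expectation_inactive_step:
  assumes t: "t \<in> {1..T}" and "v < V" "t \<le> u"
  shows "measure_pmf.expectation (step t rc) (\<lambda>rc'. of_bool (u < fst rc' v)) =
     of_bool (u < fst rc v) + of_bool (fst rc v \<le> t) * (\<Sum>s<S. lam s t * nf v s t * (1 - Gcdf g (u - t)))"
proof -
  obtain r c where rc: "rc = (r, c)"
    by fastforce
  have "measure_pmf.expectation (step t (r, c)) (\<lambda>rc. of_bool (u < fst rc v)) =
     (1 - (\<Sum>s<S. lam s t)) * of_bool (u < r v) +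
     (\<Sum>s<S. lam s t * (if r v \<le> t then nf v s t * (1 - Gcdf g (u - t)) else of_bool (u < r v)))"
    using assms by (subst expectation_sdn_step[OF t, where B = 1]) (auto simp: expectation_inactive_notify)
  also have "\<dots> = of_bool (u < r v) + of_bool (r v \<le> t) * (\<Sum>s<S. lam s t * nf v s t * (1 - Gcdf g (u - t)))"
    using \<open>t \<le> u\<close> by (cases "r v \<le> t") (auto simp: mult.assoc simp flip: sum_distrib_right)
  finally show ?thesis
    by (simp add: rc)
qed

lemma completion_prob_bounds:
  assumes "t \<in> {1..T}"
  shows "0 \<le> completion_prob r t \<and> completion_prob r t \<le> 1"
proof -
  have factor_bounds: "0 \<le> 1 - of_bool (r v \<le> t) * nf v s t * p v s \<and> 1 - of_bool (r v \<le> t) * nf v s t * p v s \<le> 1"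
    if "v < V" "s < S" for v s
    using notif_prob_nonneg_le[of v s t] notif_prob_le_1[of v s t] p_range that
    by (auto intro: mult_le_one)
  have "completion_prob r t \<le> (\<Sum>s<S. lam s t * 1)"
    unfolding completion_prob_def using assms lam_nonneg factor_bounds
    by (intro sum_mono mult_left_mono) (auto intro: prod_nonneg)
  moreover have "0 \<le> completion_prob r t"
    unfolding completion_prob_def using assms lam_nonneg factor_bounds
    by (intro sum_nonneg mult_nonneg_nonneg) (auto intro: prod_le_1)
  moreover have "(\<Sum>s<S. lam s t) \<le> 1"
    using assms lam_sum by blast
  ultimately show ?thesis
    by simp
qed

lemma expectation_count_step:
  assumes t: "t \<in> {1..T}"
  shows "measure_pmf.expectation (step t rc) (\<lambda>rc'. real (snd rc')) = real (snd rc) + completion_prob (fst rc) t"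
proof -
  obtain r c where rc: "rc = (r, c)"
    by fastforce
  have "measure_pmf.expectation (notify_pmf s t) (\<lambda>\<omega>. real (c + of_bool (task_completed r t \<omega>))) =
        real c + (1 - (\<Prod>v<V. 1 - of_bool (r v \<le> t) * nf v s t * p v s))" if "s < S" for s
    using expectation_completed_notify[OF that]
    by (simp add: Bochner_Integration.integral_add integrable_measure_pmf_bounded[where B = 1])
  then have "measure_pmf.expectation (step t (r, c)) (\<lambda>rc. real (snd rc)) =
     (1 - (\<Sum>s<S. lam s t)) * real c +
     (\<Sum>s<S. lam s t * (real c + (1 - (\<Prod>v<V. 1 - of_bool (r v \<le> t) * nf v s t * p v s))))"
    by (subst expectation_sdn_step[OF t, where B = "real c + 1"]) (auto simp: sdn_step_eq split: option.splits)
  then show ?thesis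
    by (simp add: rc completion_prob_def sum_distrib_left sum.distrib sum_subtractf algebra_simps)
qed

lemma expectation_inactive_run:
  assumes "k \<le> T" "v < V" "k \<le> u"
  shows "measure_pmf.expectation (run k) (\<lambda>rc. of_bool (u < fst rc v)) = load S lam g (x v) k u / \<kappa>"
  using assms
proof (induction k arbitrary: u)
  case 0
  then show ?case
    by (simp add: load_def)
next
  case (Suc k)
  define t where "t = Suc k"
  have t: "t \<in> {1..T}" and "t \<le> u"
    using Suc.prems by (auto simp: t_def)
  define C where "C = (\<Sum>s<S. lam s t * nf v s t * (1 - Gcdf g (u - t)))"
  have active: "measure_pmf.expectation (run k) (\<lambda>rc. of_bool (fst rc v \<le> t)) = beta S lam g x v t"
    using expectation_of_bool_not[of "run k" "\<lambda>rc. t < fst rc v"] Suc.IH[of t] Suc.prems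
    by (simp add: not_less beta_eq_load t_def)
  have "measure_pmf.expectation (run t) (\<lambda>rc. of_bool (u < fst rc v)) =
        measure_pmf.expectation (run k) (\<lambda>rc. of_bool (u < fst rc v) + of_bool (fst rc v \<le> t) * C)"
    unfolding t_def sdn_run.simps
    using expectation_inactive_step[OF t \<open>v < V\<close> \<open>t \<le> u\<close>]
    by (subst expectation_bind_pmf[where B = 1]) (auto simp: C_def t_def intro!: Bochner_Integration.integral_cong)
  also have "\<dots> = load S lam g (x v) k u / \<kappa> + C * beta S lam g x v t"
    using Suc.IH[of u] Suc.prems active
    by (simp add: Bochner_Integration.integral_add integrable_of_bool_pmf)
  also have "C * beta S lam g x v t = (\<Sum>s<S. lam s t * x v s t * (1 - Gcdf g (u - t))) / \<kappa>"
    unfolding C_def sum_distrib_right sum_divide_distrib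
    using beta_mult_notif_prob[OF \<open>v < V\<close> t] by (intro sum.cong) (simp_all add: algebra_simps diff_divide_distrib)
  finally show ?case
    by (simp only: load_Suc_right add_divide_distrib t_def)
qed

lemma expectation_active_run:
  assumes "k < T" "v < V"
  shows "measure_pmf.expectation (run k) (\<lambda>rc. of_bool (fst rc v \<le> Suc k)) = beta S lam g x v (Suc k)"
  using expectation_of_bool_not[of "run k" "\<lambda>rc. Suc k < fst rc v"] expectation_inactive_run[of k v "Suc k"] assms
  by (simp add: not_less beta_eq_load)

text \<open>
  A lower bound linear in the activity indicators: its expectation depends only on the
  marginals beta, so correlations between volunteers never have to be analysed.
\<close>

lemma completion_prob_ge_linear:
  assumes "t \<in> {1..T}"
  shows "(\<Sum>s<S. \<Sum>v<V. lam s t * nf v s t * p v s * (\<Prod>u<v. 1 - x u s t * p u s) * of_bool (r v \<le> t))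
         \<le> completion_prob r t"
  unfolding completion_prob_def
proof (intro sum_mono)
  fix s assume "s \<in> {..<S}"
  have "(\<Sum>v<V. (of_bool (r v \<le> t) * nf v s t * p v s) * (\<Prod>u<v. 1 - x u s t * p u s))
        \<le> 1 - (\<Prod>v<V. 1 - of_bool (r v \<le> t) * nf v s t * p v s)"
    using notif_prob_nonneg_le x_nonneg_le_1 p_range \<open>s \<in> {..<S}\<close>
    by (intro sum_le_one_minus_prod) (auto intro: mult_right_mono mult_le_one)
  then have "lam s t * (\<Sum>v<V. (of_bool (r v \<le> t) * nf v s t * p v s) * (\<Prod>u<v. 1 - x u s t * p u s))
        \<le> lam s t * (1 - (\<Prod>v<V. 1 - of_bool (r v \<le> t) * nf v s t * p v s))"
    using lam_nonneg assms \<open>s \<in> {..<S}\<close> by (intro mult_left_mono) auto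
  then show "(\<Sum>v<V. lam s t * nf v s t * p v s * (\<Prod>u<v. 1 - x u s t * p u s) * of_bool (r v \<le> t))
        \<le> lam s t * (1 - (\<Prod>v<V. 1 - of_bool (r v \<le> t) * nf v s t * p v s))"
    by (simp add: sum_distrib_left mult_ac)
qed

lemma expectation_completion_prob_run_ge:
  assumes "k < T"
  defines "t \<equiv> Suc k"
  shows "(\<Sum>s<S. lam s t * (1 - (\<Prod>v<V. 1 - x v s t * p v s))) / \<kappa>
         \<le> measure_pmf.expectation (run k) (\<lambda>rc. completion_prob (fst rc) t)"
proof -
  have t: "t \<in> {1..T}"
    using assms by simp
  define a where "a s v = lam s t * nf v s t * p v s * (\<Prod>u<v. 1 - x u s t * p u s)" for s v
  have "(\<Sum>s<S. lam s t * (1 - (\<Prod>v<V. 1 - x v s t * p v s))) / \<kappa>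
        = (\<Sum>s<S. \<Sum>v<V. a s v * beta S lam g x v t)"
    unfolding one_minus_prod_eq_sum sum_distrib_left sum_divide_distrib
  proof (intro sum.cong refl)
    fix s v assume "v \<in> {..<V}"
    then have beta_nf: "beta S lam g x v t * nf v s t = x v s t / \<kappa>"
      using beta_mult_notif_prob[OF _ t] by simp
    have "a s v * beta S lam g x v t = lam s t * p v s * (\<Prod>u<v. 1 - x u s t * p u s) * (beta S lam g x v t * nf v s t)"
      by (simp add: a_def mult_ac)
    then show "lam s t * (x v s t * p v s * (\<Prod>u<v. 1 - x u s t * p u s)) / \<kappa> = a s v * beta S lam g x v t"
      by (simp add: beta_nf mult_ac)
  qed
  also have "\<dots> = measure_pmf.expectation (run k) (\<lambda>rc. \<Sum>s<S. \<Sum>v<V. a s v * of_bool (fst rc v \<le> t))"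
    using expectation_active_run[OF assms(1)]
    by (simp add: integrable_of_bool_pmf t_def del: sum_mult_of_bool_eq)
  also have "\<dots> \<le> measure_pmf.expectation (run k) (\<lambda>rc. completion_prob (fst rc) t)"
  proof (rule integral_mono)
    show "integrable (run k) (\<lambda>rc. \<Sum>s<S. \<Sum>v<V. a s v * of_bool (fst rc v \<le> t))"
      by (intro Bochner_Integration.integrable_sum integrable_mult_right integrable_of_bool_pmf)
    show "integrable (run k) (\<lambda>rc. completion_prob (fst rc) t)"
      using completion_prob_bounds[OF t] by (intro integrable_measure_pmf_bounded[where B = 1]) auto
  qed (use completion_prob_ge_linear[OF t] in \<open>simp add: a_def\<close>)
  finally show ?thesis .
qed

lemma expectation_count_run_Suc:
  assumes "k < T"
  shows "measure_pmf.expectation (run (Suc k)) (\<lambda>rc. real (snd rc)) =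
         measure_pmf.expectation (run k) (\<lambda>rc. real (snd rc))
         + measure_pmf.expectation (run k) (\<lambda>rc. completion_prob (fst rc) (Suc k))"
proof -
  have t: "Suc k \<in> {1..T}"
    using assms by simp
  have "\<bar>real (snd y)\<bar> \<le> real (Suc k)" if "y \<in> set_pmf (run (Suc k))" for y
    using count_le_sdn_run[OF that] by simp
  then have "measure_pmf.expectation (run (Suc k)) (\<lambda>rc. real (snd rc)) =
        measure_pmf.expectation (run k) (\<lambda>rc. measure_pmf.expectation (step (Suc k) rc) (\<lambda>rc'. real (snd rc')))"
    unfolding sdn_run.simps by (rule expectation_bind_pmf)
  also have "\<dots> = measure_pmf.expectation (run k) (\<lambda>rc. real (snd rc) + completion_prob (fst rc) (Suc k))"
    using expectation_count_step[OF t] by simp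
  also have "\<dots> = measure_pmf.expectation (run k) (\<lambda>rc. real (snd rc))
         + measure_pmf.expectation (run k) (\<lambda>rc. completion_prob (fst rc) (Suc k))"
    using count_le_sdn_run[of _ k] completion_prob_bounds[OF t]
    by (intro Bochner_Integration.integral_add integrable_measure_pmf_bounded[where B = "real k"]
        integrable_measure_pmf_bounded[where B = 1]) auto
  finally show ?thesis .
qed

lemma expectation_count_run_ge:
  assumes "k \<le> T"
  shows "(\<Sum>t=1..k. \<Sum>s<S. lam s t * (1 - (\<Prod>v<V. 1 - x v s t * p v s))) / \<kappa>
         \<le> measure_pmf.expectation (run k) (\<lambda>rc. real (snd rc))"
  using assms
proof (induction k)
  case (Suc k)
  then show ?case
    using expectation_completion_prob_run_ge[of k] expectation_count_run_Suc[of k]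
    by (simp add: add_divide_distrib)
qed simp

lemma SDN_value_ge_fobj: "fobj V S T lam p x / \<kappa> \<le> SDN_value V S T lam p g x"
  using expectation_count_run_ge[of T] unfolding fobj_def SDN_value_def by simp

end

theorem theorem3:
  fixes V S T :: nat
    and lam :: "nat \<Rightarrow> nat \<Rightarrow> real" and p :: "nat \<Rightarrow> nat \<Rightarrow> real" and g :: "nat pmf"
    and xLP xAA xSQ xstar :: "nat \<Rightarrow> nat \<Rightarrow> nat \<Rightarrow> real"
  assumes lam_nonneg: "\<forall>s<S. \<forall>t\<in>{1..T}. 0 \<le> lam s t"
    and lam_sum: "\<forall>t\<in>{1..T}. (\<Sum>s<S. lam s t) \<le> 1"
    and p_range: "\<forall>v<V. \<forall>s<S. 0 \<le> p v s \<and> p v s \<le> 1"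
    and g_pos: "pmf g 0 = 0"
    and LP: "is_LP_opt V S T lam p g xLP"
    and AA: "is_AA_output V S T lam p g xAA"
    and SQ: "is_SQ V S T lam p g xSQ"
    and xstar_in: "xstar \<in> {xLP, xAA, xSQ}"
    and xstar_max: "\<forall>y\<in>{xLP, xAA, xSQ}. fobj V S T lam p y \<le> fobj V S T lam p xstar"
  shows "SDN_value V S T lam p g xstar
           \<ge> (1 / (2 - mdhr g)) * (1 - exp (-1)) * LPval V S T lam p g"
proof -
  have xLP_feasible: "xLP \<in> feasP V S T lam g"
    using LP by (simp add: is_LP_opt_def)
  have "xSQ \<in> feasP V S T lam g"
    using SQ by (simp add: is_SQ_def feasP_def)
  then have "xstar \<in> feasP V S T lam g"
    using xstar_in xLP_feasible AA_output_feasible[OF AA] by auto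
  then interpret sdn_instance V S T lam p g xstar
    by unfold_locales (use lam_nonneg lam_sum p_range g_pos in auto)
  have "(1 - exp (-1)) * LPval V S T lam p g \<le> fobj V S T lam p xLP"
    using LPobj_le_fobj[OF xLP_feasible lam_nonneg p_range] LPval_eq_LPobj[OF LP] by simp
  also have "\<dots> \<le> fobj V S T lam p xstar"
    using xstar_max by simp
  finally have "(1 - exp (-1)) * LPval V S T lam p g / \<kappa> \<le> fobj V S T lam p xstar / \<kappa>"
    using kappa_ge_1 by (simp add: divide_right_mono)
  then show ?thesis
    using SDN_value_ge_fobj by simp
qed

end
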